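(* Let $n\ge2$ and let $\mathcal V$ be a variety with ternary terms $t_1,\dots,t_{n-1}$ satisfying, for some $l,r:\{1,\dots,n-1\}\to\{x,z\}$, the equations $x=t_1(x,l(1),z)$, $t_h(x,r(h),z)=t_{h+1}(x,l(h+1),z)$ ($1\le h<n-1$), $t_{n-1}(x,r(n-1),z)=z$, and $t_h(x,y,x)=x$ for $1\le h\le n-1$. Then: (i) $\mathcal V$ is $(2n-1)$-modular. (ii)(a) If $l(1)=z$, then $\mathcal V$ is $(2n-2)$-modular, and this holds even if $t_1(x,y,x)=x$ is not assumed. (b) If $r(n-1)=x$, then $\mathcal V$ is $(2n-2)$-modular, even if $t_{n-1}(x,y,x)=x$ is not assumed. (c) If $n\ge3$, $l(1)=z$ and $r(n-1)=x$, then $\mathcal V$ is $(2n-3)$-reversed-modular, even if neither $t_1(x,y,x)=x$ nor $t_{n-1}(x,y,x)=x$ is assumed.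
   Context: Day terms: $4$-ary $u_0,\dots,u_m$ with $u_k(x,y,y,x)=x$ for all $k$, $u_0(x,y,z,w)=x$, $u_m(x,y,z,w)=w$, $u_k(x,x,w,w)=u_{k+1}(x,x,w,w)$ for even $k$, $u_k(x,y,y,w)=u_{k+1}(x,y,y,w)$ for odd $k$ ($0\le k<m$); reversed Day terms: even/odd exchanged in the last two conditions. $m$-modular ($m$-reversed-modular): having Day (reversed Day) terms $u_0,\dots,u_m$. *)

theory Defs
  imports Main
begin

text \<open>Terms over a signature with operation symbols of type 'f; variables are natural numbers.
  Variable 0,1,2,3 play the roles of x,y,z,w.\<close>
datatype ('f, 'v) trm = Var 'v | Fn 'f "('f, 'v) trm list"

fun wf_trm :: "('f \<Rightarrow> nat) \<Rightarrow> nat \<Rightarrow> ('f, nat) trm \<Rightarrow> bool" where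
  "wf_trm ar k (Var v) = (v < k)"
| "wf_trm ar k (Fn f ts) = (length ts = ar f \<and> (\<forall>s\<in>set ts. wf_trm ar k s))"

record ('a, 'f) alg =
  car :: "'a set"
  ops :: "'f \<Rightarrow> 'a list \<Rightarrow> 'a"

definition is_alg :: "('f \<Rightarrow> nat) \<Rightarrow> ('a, 'f) alg \<Rightarrow> bool" where
  "is_alg ar A \<longleftrightarrow> (\<forall>f as. length as = ar f \<and> set as \<subseteq> car A \<longrightarrow> ops A f as \<in> car A)"

fun eval :: "('a, 'f) alg \<Rightarrow> (nat \<Rightarrow> 'a) \<Rightarrow> ('f, nat) trm \<Rightarrow> 'a" where
  "eval A \<rho> (Var v) = \<rho> v"
| "eval A \<rho> (Fn f ts) = ops A f (map (eval A \<rho>) ts)"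

definition tapp :: "('a, 'f) alg \<Rightarrow> ('f, nat) trm \<Rightarrow> 'a list \<Rightarrow> 'a" where
  "tapp A t as = eval A (\<lambda>i. as ! i) t"

definition day_terms :: "('f \<Rightarrow> nat) \<Rightarrow> ('a, 'f) alg set \<Rightarrow> nat \<Rightarrow> (nat \<Rightarrow> ('f, nat) trm) \<Rightarrow> bool" where
  "day_terms ar K m u \<longleftrightarrow>
     (\<forall>k\<le>m. wf_trm ar 4 (u k)) \<and>
     (\<forall>A\<in>K. \<forall>x\<in>car A. \<forall>y\<in>car A. \<forall>z\<in>car A. \<forall>w\<in>car A.
        (\<forall>k\<le>m. tapp A (u k) [x, y, y, x] = x) \<and>
        tapp A (u 0) [x, y, z, w] = x \<and>
        tapp A (u m) [x, y, z, w] = w \<and>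
        (\<forall>k<m. even k \<longrightarrow> tapp A (u k) [x, x, w, w] = tapp A (u (Suc k)) [x, x, w, w]) \<and>
        (\<forall>k<m. odd k \<longrightarrow> tapp A (u k) [x, y, y, w] = tapp A (u (Suc k)) [x, y, y, w]))"

definition rev_day_terms :: "('f \<Rightarrow> nat) \<Rightarrow> ('a, 'f) alg set \<Rightarrow> nat \<Rightarrow> (nat \<Rightarrow> ('f, nat) trm) \<Rightarrow> bool" where
  "rev_day_terms ar K m u \<longleftrightarrow>
     (\<forall>k\<le>m. wf_trm ar 4 (u k)) \<and>
     (\<forall>A\<in>K. \<forall>x\<in>car A. \<forall>y\<in>car A. \<forall>z\<in>car A. \<forall>w\<in>car A.
        (\<forall>k\<le>m. tapp A (u k) [x, y, y, x] = x) \<and>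
        tapp A (u 0) [x, y, z, w] = x \<and>
        tapp A (u m) [x, y, z, w] = w \<and>
        (\<forall>k<m. odd k \<longrightarrow> tapp A (u k) [x, x, w, w] = tapp A (u (Suc k)) [x, x, w, w]) \<and>
        (\<forall>k<m. even k \<longrightarrow> tapp A (u k) [x, y, y, w] = tapp A (u (Suc k)) [x, y, y, w]))"

definition modular :: "('f \<Rightarrow> nat) \<Rightarrow> ('a, 'f) alg set \<Rightarrow> nat \<Rightarrow> bool" where
  "modular ar K m \<longleftrightarrow> (\<exists>u. day_terms ar K m u)"

definition rev_modular :: "('f \<Rightarrow> nat) \<Rightarrow> ('a, 'f) alg set \<Rightarrow> nat \<Rightarrow> bool" where
  "rev_modular ar K m \<longleftrightarrow> (\<exists>u. rev_day_terms ar K m u)"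

datatype xz = X | Z

fun pick :: "xz \<Rightarrow> 'a \<Rightarrow> 'a \<Rightarrow> 'a" where
  "pick X a c = a"
| "pick Z a c = c"

end

theory Submission
  imports Defs
begin

text \<open>Each t_h yields two 4-ary terms t_h(x, y or z, w), the middle argument being y or z
  according as l(h) (resp. r(h)) is x or z. On (x,x,w,w) they become the two ends
  t_h(x, l(h), w) and t_h(x, r(h), w) of the h-th link of the chain, so the terms of consecutive links
  agree; on (x,y,y,w) both become t_h(x,y,w); on (x,y,y,x) both reduce to x by t_h(x,y,x) = x.
  Hence x, these 2n-2 terms and w are Day terms. If r(n-1) = x then t_(n-1)(y,y,w) = w, and the
  last two terms can be replaced by the single term t_(n-1)(y, l(n-1), w); symmetrically, if l(1) = z
  then t_1(x,y,y) = x and one term can be saved at the front, which shifts all parities and gives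
  reversed Day terms. These end terms need no absorption law. The case l(1) = z alone reduces to
  r(n-1) = x by reading the chain backwards with x and z exchanged.\<close>

fun trm_rename :: "nat list \<Rightarrow> ('f, nat) trm \<Rightarrow> ('f, nat) trm" where
  "trm_rename vs (Var v) = Var (vs ! v)"
| "trm_rename vs (Fn f ts) = Fn f (map (trm_rename vs) ts)"

lemma eval_trm_rename: "eval A \<rho> (trm_rename vs t) = eval A (\<lambda>v. \<rho> (vs ! v)) t"
  by (induction t) (auto cong: map_cong)

lemma eval_cong_wf_trm:
  "wf_trm ar k t \<Longrightarrow> (\<And>v. v < k \<Longrightarrow> \<rho> v = \<rho>' v) \<Longrightarrow> eval A \<rho> t = eval A \<rho>' t"
  by (induction t) (auto cong: map_cong)

lemma wf_trm_rename:
  "wf_trm ar (length vs) t \<Longrightarrow> \<forall>v\<in>set vs. v < k \<Longrightarrow> wf_trm ar k (trm_rename vs t)"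
  by (induction t) auto

lemma tapp_trm_rename:
  "wf_trm ar (length vs) t \<Longrightarrow> tapp A (trm_rename vs t) as = tapp A t (map ((!) as) vs)"
  unfolding tapp_def eval_trm_rename by (rule eval_cong_wf_trm) auto

lemma tapp_Var [simp]: "tapp A (Var i) as = as ! i"
  by (simp add: tapp_def)

lemma day_terms_alternating:
  fixes L R :: "nat \<Rightarrow> ('f, nat) trm"
  assumes wf: "\<And>h. h \<in> {1..N} \<Longrightarrow> wf_trm ar 4 (L h) \<and> wf_trm ar 4 (R h)"
    and ends: "R 0 = Var 0" "L (Suc N) = Var 3"
    and absorb: "\<And>A x y h. A \<in> K \<Longrightarrow> x \<in> car A \<Longrightarrow> y \<in> car A \<Longrightarrow> h \<in> {1..N} \<Longrightarrow>
        tapp A (L h) [x, y, y, x] = x \<and> tapp A (R h) [x, y, y, x] = x"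
    and diag: "\<And>A x w h. A \<in> K \<Longrightarrow> x \<in> car A \<Longrightarrow> w \<in> car A \<Longrightarrow> h \<le> N \<Longrightarrow>
        tapp A (R h) [x, x, w, w] = tapp A (L (Suc h)) [x, x, w, w]"
    and cross: "\<And>A x y w h. A \<in> K \<Longrightarrow> x \<in> car A \<Longrightarrow> y \<in> car A \<Longrightarrow> w \<in> car A \<Longrightarrow> h \<in> {1..N} \<Longrightarrow>
        tapp A (L h) [x, y, y, w] = tapp A (R h) [x, y, y, w]"
  shows "day_terms ar K (Suc (2 * N)) (\<lambda>k. if even k then R (k div 2) else L (Suc (k div 2)))"
    (is "day_terms ar K _ ?u")
proof -
  have index_cases: "k = 0 \<or> (\<exists>h\<in>{1..N}. k = 2 * h \<or> k = 2 * h - 1) \<or> k = Suc (2 * N)"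
    if "k \<le> Suc (2 * N)" for k
  proof (cases "even k")
    case True
    then obtain h where "k = 2 * h" by (rule evenE)
    with that show ?thesis by (cases "h = 0") auto
  next
    case False
    then obtain h where "k = 2 * h + 1" by (rule oddE)
    with that show ?thesis by (cases "h = N") (auto intro!: bexI[of _ "Suc h"])
  qed
  show ?thesis
    unfolding day_terms_def
  proof (intro conjI ballI allI impI)
    fix k assume "k \<le> Suc (2 * N)"
    with index_cases wf ends show "wf_trm ar 4 (?u k)"
      by fastforce
  next
    fix A x y z w assume A: "A \<in> K" "x \<in> car A" "y \<in> car A" "z \<in> car A" "w \<in> car A"
    show "tapp A (?u k) [x, y, y, x] = x" if "k \<le> Suc (2 * N)" for k
      using index_cases[OF that] absorb[OF A(1,2,3)] ends by fastforce
    show "tapp A (?u 0) [x, y, z, w] = x" "tapp A (?u (Suc (2 * N))) [x, y, z, w] = w"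
      using ends by simp_all
    show "tapp A (?u k) [x, x, w, w] = tapp A (?u (Suc k)) [x, x, w, w]" if "k < Suc (2 * N)" "even k" for k
      using that diag[OF A(1,2,5)] by (auto elim!: evenE)
    show "tapp A (?u k) [x, y, y, w] = tapp A (?u (Suc k)) [x, y, y, w]" if "k < Suc (2 * N)" "odd k" for k
      using that cross[OF A(1,2,3,5)] by (auto elim!: oddE)
  qed
qed

lemma day_terms_drop_last:
  assumes "day_terms ar K (Suc m) u" and "u m = Var 3"
  shows "day_terms ar K m u"
  using assms unfolding day_terms_def by (auto simp: numeral_eq_Suc)

lemma rev_day_terms_drop_first:
  assumes "day_terms ar K (Suc m) u" and "u 1 = Var 0"
  shows "rev_day_terms ar K m (\<lambda>k. u (Suc k))"
  using assms unfolding day_terms_def rev_day_terms_def by auto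

text \<open>Position among \<open>(x, y, z, w)\<close> of the middle argument: on \<open>(x, x, w, w)\<close> it reads
  \<open>pick c x w\<close>, on \<open>(x, y, y, w)\<close> it reads \<open>y\<close>.\<close>
fun mid_var :: "xz \<Rightarrow> nat" where
  "mid_var X = 1"
| "mid_var Z = 2"

lemma pick_same [simp]: "pick c a a = a"
  by (cases c) simp_all

lemma tapp_rename_mid_var:
  assumes "wf_trm ar 3 s"
  shows "tapp A (trm_rename [a, mid_var c, b] s) [x, y, z, w] = tapp A s [[x, y, z, w] ! a, pick c y z, [x, y, z, w] ! b]"
proof -
  have "wf_trm ar (length [a, mid_var c, b]) s"
    using assms by (simp add: numeral_3_eq_3)
  then show ?thesis
    by (cases c) (simp_all add: tapp_trm_rename)
qed

lemma wf_rename_mid_var: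
  "wf_trm ar 3 s \<Longrightarrow> a < 4 \<Longrightarrow> b < 4 \<Longrightarrow> wf_trm ar 4 (trm_rename [a, mid_var c, b] s)"
  by (rule wf_trm_rename) (cases c; auto simp: numeral_3_eq_3)+

fun swap_xz :: "xz \<Rightarrow> xz" where
  "swap_xz X = Z"
| "swap_xz Z = X"

lemma pick_swap_xz [simp]: "pick (swap_xz c) a b = pick c b a"
  by (cases c) simp_all

definition mirror_trm :: "('f, nat) trm \<Rightarrow> ('f, nat) trm" where
  "mirror_trm s = trm_rename [2, 1, 0] s"

lemma wf_mirror_trm: "wf_trm ar 3 s \<Longrightarrow> wf_trm ar 3 (mirror_trm s)"
  unfolding mirror_trm_def by (rule wf_trm_rename) (auto simp: numeral_3_eq_3)

lemma tapp_mirror_trm: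
  assumes "wf_trm ar 3 s"
  shows "tapp A (mirror_trm s) [x, y, z] = tapp A s [z, y, x]"
proof -
  have "wf_trm ar (length [2, 1, 0 :: nat]) s"
    using assms by (simp add: numeral_3_eq_3)
  then show ?thesis
    by (simp add: mirror_trm_def tapp_trm_rename)
qed

locale ternary_chain =
  fixes ar :: "'f \<Rightarrow> nat"
    and K :: "('a, 'f) alg set"
    and n :: nat
    and t :: "nat \<Rightarrow> ('f, nat) trm"
    and l r :: "nat \<Rightarrow> xz"
  assumes n2: "n \<ge> 2"
    and tern: "\<forall>h\<in>{1..n-1}. wf_trm ar 3 (t h)"
    and first: "\<forall>A\<in>K. \<forall>x\<in>car A. \<forall>z\<in>car A. x = tapp A (t 1) [x, pick (l 1) x z, z]"
    and chain: "\<forall>A\<in>K. \<forall>x\<in>car A. \<forall>z\<in>car A. \<forall>h. 1 \<le> h \<and> h < n - 1 \<longrightarrow>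
                  tapp A (t h) [x, pick (r h) x z, z] = tapp A (t (h+1)) [x, pick (l (h+1)) x z, z]"
    and last: "\<forall>A\<in>K. \<forall>x\<in>car A. \<forall>z\<in>car A. tapp A (t (n-1)) [x, pick (r (n-1)) x z, z] = z"
begin

definition left_trm :: "nat \<Rightarrow> ('f, nat) trm" where
  "left_trm h = trm_rename [0, mid_var (l h), 3] (t h)"

definition right_trm :: "nat \<Rightarrow> ('f, nat) trm" where
  "right_trm h = trm_rename [0, mid_var (r h), 3] (t h)"

definition head_trm :: "('f, nat) trm" where
  "head_trm = trm_rename [0, mid_var (r 1), 2] (t 1)"

definition tail_trm :: "('f, nat) trm" where
  "tail_trm = trm_rename [1, mid_var (l (n - 1)), 3] (t (n - 1))"

lemma wf_trm_t: "h \<in> {1..n-1} \<Longrightarrow> wf_trm ar 3 (t h)"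
  using tern by blast

lemma wf_trm_chain:
  "h \<in> {1..n-1} \<Longrightarrow> wf_trm ar 4 (left_trm h)"
  "h \<in> {1..n-1} \<Longrightarrow> wf_trm ar 4 (right_trm h)"
  "wf_trm ar 4 head_trm"
  "wf_trm ar 4 tail_trm"
  using n2 by (auto simp: left_trm_def right_trm_def head_trm_def tail_trm_def
      intro!: wf_rename_mid_var wf_trm_t)

lemma tapp_chain_trm:
  "h \<in> {1..n-1} \<Longrightarrow> tapp A (left_trm h) [x, y, z, w] = tapp A (t h) [x, pick (l h) y z, w]"
  "h \<in> {1..n-1} \<Longrightarrow> tapp A (right_trm h) [x, y, z, w] = tapp A (t h) [x, pick (r h) y z, w]"
  "tapp A head_trm [x, y, z, w] = tapp A (t 1) [x, pick (r 1) y z, z]"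
  "tapp A tail_trm [x, y, z, w] = tapp A (t (n - 1)) [y, pick (l (n - 1)) y z, w]"
  using n2 unfolding left_trm_def right_trm_def head_trm_def tail_trm_def
  by (auto simp: tapp_rename_mid_var[OF wf_trm_t])

lemma diagonal_link:
  assumes A: "A \<in> K" "x \<in> car A" "w \<in> car A"
    and L: "\<And>h. h \<in> {1..n-1} \<Longrightarrow> tapp A (L h) [x, x, w, w] = tapp A (t h) [x, pick (l h) x w, w]"
    and R: "\<And>h. h \<in> {1..n-1} \<Longrightarrow> tapp A (R h) [x, x, w, w] = tapp A (t h) [x, pick (r h) x w, w]"
    and ends: "R 0 = Var 0" "L n = Var 3"
    and h: "h \<le> n - 1"
  shows "tapp A (R h) [x, x, w, w] = tapp A (L (Suc h)) [x, x, w, w]"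
proof -
  consider "h = 0" | "1 \<le> h" "h < n - 1" | "h = n - 1"
    using h by linarith
  then show ?thesis
  proof cases
    case 1
    then show ?thesis
      using first A n2 by (simp add: ends L)
  next
    case 2
    then show ?thesis
      using chain A by (simp add: L R)
  next
    case 3
    then show ?thesis
      using last A n2 by (simp add: ends R)
  qed
qed

lemma first_trm_collapse:
  assumes "l 1 = Z" "A \<in> K" "x \<in> car A" "y \<in> car A"
  shows "tapp A (t 1) [x, y, y] = x"
  using first assms by force

lemma last_trm_collapse:
  assumes "r (n - 1) = X" "A \<in> K" "y \<in> car A" "w \<in> car A"
  shows "tapp A (t (n - 1)) [y, y, w] = w"
  using last assms by force

lemma chain_modular:
  assumes absorb: "\<forall>h\<in>{1..n-1}. \<forall>A\<in>K. \<forall>x\<in>car A. \<forall>y\<in>car A. tapp A (t h) [x, y, x] = x"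
  shows "modular ar K (2 * n - 1)"
proof -
  let ?L = "left_trm(n := Var 3)" and ?R = "right_trm(0 := Var 0)"
  have "day_terms ar K (Suc (2 * (n - 1)))
      (\<lambda>k. if even k then ?R (k div 2) else ?L (Suc (k div 2)))"
  proof (rule day_terms_alternating)
    show "?R 0 = Var 0" "?L (Suc (n - 1)) = Var 3"
      using n2 by simp_all
  next
    fix A x w h assume "A \<in> K" "x \<in> car A" "w \<in> car A" "h \<le> n - 1"
    then show "tapp A (?R h) [x, x, w, w] = tapp A (?L (Suc h)) [x, x, w, w]"
      by (intro diagonal_link) (auto simp: tapp_chain_trm)
  qed (use absorb in \<open>auto simp: wf_trm_chain tapp_chain_trm\<close>)
  moreover have "Suc (2 * (n - 1)) = 2 * n - 1"
    using n2 by simp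
  ultimately show ?thesis
    unfolding modular_def by auto
qed

lemma chain_modular_tail:
  assumes rX: "r (n - 1) = X"
    and absorb: "\<forall>h\<in>{1..n-2}. \<forall>A\<in>K. \<forall>x\<in>car A. \<forall>y\<in>car A. tapp A (t h) [x, y, x] = x"
  shows "modular ar K (2 * n - 2)"
proof -
  let ?L = "left_trm(n - 1 := tail_trm, n := Var 3)" and ?R = "right_trm(0 := Var 0, n - 1 := Var 3)"
  let ?u = "\<lambda>k. if even k then ?R (k div 2) else ?L (Suc (k div 2))"
  have "day_terms ar K (Suc (2 * (n - 1))) ?u"
  proof (rule day_terms_alternating)
    show "?R 0 = Var 0" "?L (Suc (n - 1)) = Var 3"
      using n2 by simp_all
  next
    fix A x w h assume "A \<in> K" "x \<in> car A" "w \<in> car A" "h \<le> n - 1"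
    then show "tapp A (?R h) [x, x, w, w] = tapp A (?L (Suc h)) [x, x, w, w]"
      using last n2 by (intro diagonal_link) (auto simp: tapp_chain_trm)
  qed (use absorb last_trm_collapse[OF rX] in \<open>auto simp: wf_trm_chain tapp_chain_trm\<close>)
  then have "day_terms ar K (2 * (n - 1)) ?u"
    by (rule day_terms_drop_last) simp
  moreover have "2 * (n - 1) = 2 * n - 2"
    by simp
  ultimately show ?thesis
    unfolding modular_def by auto
qed

lemma chain_rev_modular:
  assumes n3: "n \<ge> 3" and lZ: "l 1 = Z" and rX: "r (n - 1) = X"
    and absorb: "\<forall>h\<in>{2..n-2}. \<forall>A\<in>K. \<forall>x\<in>car A. \<forall>y\<in>car A. tapp A (t h) [x, y, x] = x"
  shows "rev_modular ar K (2 * n - 3)"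
proof -
  let ?L = "left_trm(1 := Var 0, n - 1 := tail_trm, n := Var 3)"
    and ?R = "right_trm(0 := Var 0, 1 := head_trm, n - 1 := Var 3)"
  let ?u = "\<lambda>k. if even k then ?R (k div 2) else ?L (Suc (k div 2))"
  have "day_terms ar K (Suc (2 * (n - 1))) ?u"
  proof (rule day_terms_alternating)
    show "?R 0 = Var 0" "?L (Suc (n - 1)) = Var 3"
      using n3 by simp_all
  next
    fix A x w h assume "A \<in> K" "x \<in> car A" "w \<in> car A" "h \<le> n - 1"
    then show "tapp A (?R h) [x, x, w, w] = tapp A (?L (Suc h)) [x, x, w, w]"
      using first last n3 by (intro diagonal_link) (auto simp: tapp_chain_trm)
  qed (use n3 absorb first_trm_collapse[OF lZ] last_trm_collapse[OF rX] in
      \<open>auto simp: wf_trm_chain tapp_chain_trm\<close>)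
  then have "day_terms ar K (2 * (n - 1)) ?u"
    by (rule day_terms_drop_last) simp
  moreover have "2 * (n - 1) = Suc (2 * n - 3)"
    using n3 by simp
  ultimately have "rev_day_terms ar K (2 * n - 3) (\<lambda>k. ?u (Suc k))"
    using n3 by (intro rev_day_terms_drop_first) auto
  then show ?thesis
    unfolding rev_modular_def by blast
qed

lemma mirror_index: "h \<in> {1..n-1} \<Longrightarrow> n - h \<in> {1..n-1}"
  by auto

lemma tapp_mirror:
  "h \<in> {1..n-1} \<Longrightarrow> tapp A (mirror_trm (t h)) [x, y, z] = tapp A (t h) [z, y, x]"
  by (rule tapp_mirror_trm, rule wf_trm_t)

lemma ternary_chain_mirror:
  "ternary_chain ar K n (\<lambda>h. mirror_trm (t (n - h)))
     (\<lambda>h. swap_xz (r (n - h))) (\<lambda>h. swap_xz (l (n - h)))"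
proof
  show "n \<ge> 2"
    by (fact n2)
  show "\<forall>h\<in>{1..n-1}. wf_trm ar 3 (mirror_trm (t (n - h)))"
    by (blast intro: wf_mirror_trm wf_trm_t mirror_index)
  show "\<forall>A\<in>K. \<forall>x\<in>car A. \<forall>z\<in>car A. x = tapp A (mirror_trm (t (n - 1))) [x, pick (swap_xz (r (n - 1))) x z, z]"
    using last n2 mirror_index[of 1] by (simp add: tapp_mirror)
  show "\<forall>A\<in>K. \<forall>x\<in>car A. \<forall>z\<in>car A.
      tapp A (mirror_trm (t (n - (n - 1)))) [x, pick (swap_xz (l (n - (n - 1)))) x z, z] = z"
    using first n2 mirror_index[of "n - 1"] by (simp add: tapp_mirror)
  show "\<forall>A\<in>K. \<forall>x\<in>car A. \<forall>z\<in>car A. \<forall>h. 1 \<le> h \<and> h < n - 1 \<longrightarrow>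
      tapp A (mirror_trm (t (n - h))) [x, pick (swap_xz (l (n - h))) x z, z] =
      tapp A (mirror_trm (t (n - (h + 1)))) [x, pick (swap_xz (r (n - (h + 1)))) x z, z]"
  proof (intro ballI allI impI)
    fix A x z h assume A: "A \<in> K" "x \<in> car A" "z \<in> car A" and h: "1 \<le> h \<and> h < n - 1"
    have "1 \<le> n - (h + 1)" "n - (h + 1) < n - 1" "n - h = n - (h + 1) + 1"
      and idx: "n - h \<in> {1..n-1}" "n - (h + 1) \<in> {1..n-1}"
      using h by auto
    then have "tapp A (t (n - (h + 1))) [z, pick (r (n - (h + 1))) z x, x] =
        tapp A (t (n - h)) [z, pick (l (n - h)) z x, x]"
      using chain A by metis
    then show "tapp A (mirror_trm (t (n - h))) [x, pick (swap_xz (l (n - h))) x z, z] =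
        tapp A (mirror_trm (t (n - (h + 1)))) [x, pick (swap_xz (r (n - (h + 1)))) x z, z]"
      unfolding tapp_mirror[OF idx(1)] tapp_mirror[OF idx(2)] pick_swap_xz by simp
  qed
qed

lemma chain_modular_head:
  assumes lZ: "l 1 = Z"
    and absorb: "\<forall>h\<in>{2..n-1}. \<forall>A\<in>K. \<forall>x\<in>car A. \<forall>y\<in>car A. tapp A (t h) [x, y, x] = x"
  shows "modular ar K (2 * n - 2)"
proof -
  interpret mirror: ternary_chain ar K n "\<lambda>h. mirror_trm (t (n - h))"
      "\<lambda>h. swap_xz (r (n - h))" "\<lambda>h. swap_xz (l (n - h))"
    by (rule ternary_chain_mirror)
  have "swap_xz (l (n - (n - 1))) = X"
    using lZ n2 by simp
  moreover have "\<forall>h\<in>{1..n-2}. \<forall>A\<in>K. \<forall>x\<in>car A. \<forall>y\<in>car A.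
      tapp A (mirror_trm (t (n - h))) [x, y, x] = x"
  proof (intro ballI)
    fix h A x y assume "h \<in> {1..n-2}" "A \<in> K" "x \<in> car A" "y \<in> car A"
    moreover have "n - h \<in> {2..n-1}" "n - h \<in> {1..n-1}"
      using \<open>h \<in> {1..n-2}\<close> by auto
    ultimately show "tapp A (mirror_trm (t (n - h))) [x, y, x] = x"
      using absorb by (simp add: tapp_mirror)
  qed
  ultimately show ?thesis
    by (rule mirror.chain_modular_tail)
qed

end

theorem corollary7p11:
  fixes ar :: "'f \<Rightarrow> nat"
    and K :: "('a, 'f) alg set"
    and n :: nat
    and t :: "nat \<Rightarrow> ('f, nat) trm"
    and l r :: "nat \<Rightarrow> xz"
  assumes n2: "n \<ge> 2"
    and algs: "\<forall>A\<in>K. is_alg ar A"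
    and tern: "\<forall>h\<in>{1..n-1}. wf_trm ar 3 (t h)"
    and first: "\<forall>A\<in>K. \<forall>x\<in>car A. \<forall>z\<in>car A. x = tapp A (t 1) [x, pick (l 1) x z, z]"
    and chain: "\<forall>A\<in>K. \<forall>x\<in>car A. \<forall>z\<in>car A. \<forall>h. 1 \<le> h \<and> h < n - 1 \<longrightarrow>
                  tapp A (t h) [x, pick (r h) x z, z] = tapp A (t (h+1)) [x, pick (l (h+1)) x z, z]"
    and last: "\<forall>A\<in>K. \<forall>x\<in>car A. \<forall>z\<in>car A. tapp A (t (n-1)) [x, pick (r (n-1)) x z, z] = z"
  shows "((\<forall>h\<in>{1..n-1}. \<forall>A\<in>K. \<forall>x\<in>car A. \<forall>y\<in>car A. tapp A (t h) [x, y, x] = x)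
            \<longrightarrow> modular ar K (2*n - 1))
       \<and> ((l 1 = Z \<and> (\<forall>h\<in>{2..n-1}. \<forall>A\<in>K. \<forall>x\<in>car A. \<forall>y\<in>car A. tapp A (t h) [x, y, x] = x))
            \<longrightarrow> modular ar K (2*n - 2))
       \<and> ((r (n-1) = X \<and> (\<forall>h\<in>{1..n-2}. \<forall>A\<in>K. \<forall>x\<in>car A. \<forall>y\<in>car A. tapp A (t h) [x, y, x] = x))
            \<longrightarrow> modular ar K (2*n - 2))
       \<and> ((n \<ge> 3 \<and> l 1 = Z \<and> r (n-1) = X \<and>
             (\<forall>h\<in>{2..n-2}. \<forall>A\<in>K. \<forall>x\<in>car A. \<forall>y\<in>car A. tapp A (t h) [x, y, x] = x))
            \<longrightarrow> rev_modular ar K (2*n - 3))"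
proof -
  interpret ternary_chain ar K n t l r
    using n2 tern first chain last by unfold_locales
  show ?thesis
    using chain_modular chain_modular_head chain_modular_tail chain_rev_modular by blast
qed

end
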